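(* Let $G$ be a graph with $n$ vertices and a Hamilton cycle $C$, let $k \ge 1$ be a divisor of $n$, and let $s \ge n/k$. Then the subgraph of $\mathcal{R}_s(G,k)$ induced by the canonical $k$-partitions is connected and has diameter at most $k^2+1$.
   Context: A connected $k$-partition of a graph $G$ on $n$ vertices is a partition of $V(G)$ into $k$ nonempty sets (districts) each inducing a connected subgraph. It is a $(k,s)$-BCP (balanced with slack $s \ge 0$) if every district $U$ satisfies $\big||U| - n/k\big| \le s$; $\mathsf{Bal}_s(G,k)$ is the set of $(k,s)$-BCPs. Two distinct $(k,s)$-BCPs $\{V_1,\dots,V_k\}$, $\{W_1,\dots,W_k\}$ are related by a recombination move if there exist $i,j$ and a permutation $\pi$ of $\{1,\dots,k\}$ with $V_i\cup V_j = W_{\pi(i)}\cup W_{\pi(j)}$ and $V_\ell = W_{\pi(\ell)}$ for $\ell\notin\{i,j\}$. $\mathcal{R}_s(G,k)$ is the graph on $\mathsf{Bal}_s(G,k)$ whose edges are recombination moves. Given a Hamilton cycle $C$ of $G$, a partition in $\mathsf{Bal}_s(G,k)$ is canonical if each district consists of consecutive vertices along $C$. *)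

theory Defs
  imports Complex_Main
begin

definition simple_graph :: "'a set \<Rightarrow> ('a \<Rightarrow> 'a \<Rightarrow> bool) \<Rightarrow> bool" where
  "simple_graph V E \<longleftrightarrow> finite V \<and> (\<forall>u v. E u v \<longrightarrow> u \<in> V \<and> v \<in> V)
     \<and> (\<forall>u v. E u v \<longrightarrow> E v u) \<and> (\<forall>v. \<not> E v v)"

definition hamilton_cycle :: "'a set \<Rightarrow> ('a \<Rightarrow> 'a \<Rightarrow> bool) \<Rightarrow> 'a list \<Rightarrow> bool" where
  "hamilton_cycle V E C \<longleftrightarrow> distinct C \<and> set C = V \<and> length C \<ge> 3
     \<and> (\<forall>i < length C. E (C ! i) (C ! ((i + 1) mod length C)))"

definition induces_connected :: "('a \<Rightarrow> 'a \<Rightarrow> bool) \<Rightarrow> 'a set \<Rightarrow> bool" where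
  "induces_connected E U \<longleftrightarrow>
     (\<forall>u\<in>U. \<forall>v\<in>U. (\<lambda>x y. x \<in> U \<and> y \<in> U \<and> E x y)\<^sup>*\<^sup>* u v)"

definition connected_partition :: "'a set \<Rightarrow> ('a \<Rightarrow> 'a \<Rightarrow> bool) \<Rightarrow> nat \<Rightarrow> 'a set set \<Rightarrow> bool" where
  "connected_partition V E k P \<longleftrightarrow> finite P \<and> card P = k \<and> \<Union>P = V
     \<and> (\<forall>U\<in>P. U \<noteq> {}) \<and> (\<forall>U\<in>P. \<forall>W\<in>P. U \<noteq> W \<longrightarrow> U \<inter> W = {})
     \<and> (\<forall>U\<in>P. induces_connected E U)"

definition Bal :: "'a set \<Rightarrow> ('a \<Rightarrow> 'a \<Rightarrow> bool) \<Rightarrow> real \<Rightarrow> nat \<Rightarrow> 'a set set set" where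
  "Bal V E s k = {P. connected_partition V E k P
      \<and> (\<forall>U\<in>P. \<bar>real (card U) - real (card V) / real k\<bar> \<le> s)}"

definition recomb :: "'a set set \<Rightarrow> 'a set set \<Rightarrow> bool" where
  "recomb P Q \<longleftrightarrow> P \<noteq> Q \<and> (\<exists>A\<in>P. \<exists>B\<in>P. \<exists>C\<in>Q. \<exists>D\<in>Q. A \<noteq> B \<and> C \<noteq> D
      \<and> A \<union> B = C \<union> D \<and> P - {A, B} = Q - {C, D})"

definition R_edge :: "'a set \<Rightarrow> ('a \<Rightarrow> 'a \<Rightarrow> bool) \<Rightarrow> real \<Rightarrow> nat \<Rightarrow> 'a set set \<Rightarrow> 'a set set \<Rightarrow> bool" where
  "R_edge V E s k P Q \<longleftrightarrow> P \<in> Bal V E s k \<and> Q \<in> Bal V E s k \<and> recomb P Q"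

definition consecutive_on :: "'a list \<Rightarrow> 'a set \<Rightarrow> bool" where
  "consecutive_on C U \<longleftrightarrow> (\<exists>i < length C. \<exists>l. l \<le> length C \<and>
      U = {C ! ((i + t) mod length C) | t. t < l})"

definition canonical :: "'a list \<Rightarrow> 'a set set \<Rightarrow> bool" where
  "canonical C P \<longleftrightarrow> (\<forall>U\<in>P. consecutive_on C U)"

definition Canon :: "'a set \<Rightarrow> ('a \<Rightarrow> 'a \<Rightarrow> bool) \<Rightarrow> 'a list \<Rightarrow> real \<Rightarrow> nat \<Rightarrow> 'a set set set" where
  "Canon V E C s k = {P \<in> Bal V E s k. canonical C P}"

end

theory Submission
  imports Defs
begin

text \<open>Index the Hamilton cycle by the integers modulo n. A canonical partition is then
described by a strictly increasing sequence of cut positions f with f (j + k) = f j + n,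
district j being the arc [f j, f (j + 1)). Moving a single cut, with all district sizes
staying between 1 and n/k + s, is a recombination move of the two districts at that cut.
Writing f j = f 0 + j d + D j (d = n/k) and rotating the indices so that the defect D is
nonnegative, one has D r \<le> (k - r)(d - 1). Capping D successively at the levels
(k - 1 - u)(d - 1), u = 0, ..., k - 2, changes only the cuts 1, ..., u + 1 at stage u and
keeps all gaps below max(old gap, 2d - 1); this reaches the equally spaced partition with
the same first cut after k(k - 1)/2 moves. Two equally spaced partitions differ by a
rotation by less than d, which is performed in k moves, one cut at a time. Hence any two
canonical partitions are joined by at most k(k - 1) + k = k^2 moves.\<close>

section \<open>Walks of bounded length\<close>

definition reachable_within :: "('a \<Rightarrow> 'a \<Rightarrow> bool) \<Rightarrow> nat \<Rightarrow> 'a \<Rightarrow> 'a \<Rightarrow> bool" where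
  "reachable_within R N x y \<longleftrightarrow> (\<exists>m \<le> N. (R ^^ m) x y)"

lemma reachable_within_refl: "reachable_within R N x x"
  unfolding reachable_within_def by (intro exI[where x=0]) simp

lemma reachable_within_step: "R x y \<Longrightarrow> reachable_within R 1 x y"
  unfolding reachable_within_def using relpowp_1[of R] by (metis order_refl)

lemma reachable_within_trans:
  "reachable_within R a x y \<Longrightarrow> reachable_within R b y z \<Longrightarrow> reachable_within R (a + b) x z"
  unfolding reachable_within_def by (metis add_mono relpowp_trans)

lemma reachable_within_mono: "reachable_within R a x y \<Longrightarrow> a \<le> b \<Longrightarrow> reachable_within R b x y"
  unfolding reachable_within_def using order_trans by blast

lemma relpowp_symp: "symp R \<Longrightarrow> (R ^^ m) x y \<Longrightarrow> (R ^^ m) y x"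
proof (induction m arbitrary: x y)
  case (Suc m)
  then obtain z where "(R ^^ m) x z" "R z y" by (auto elim: relpowp_Suc_E)
  then show ?case using Suc by (meson relpowp_Suc_I2 sympD)
qed simp

lemma reachable_within_sym: "symp R \<Longrightarrow> reachable_within R N x y \<Longrightarrow> reachable_within R N y x"
  unfolding reachable_within_def by (auto dest: relpowp_symp)

lemma recomb_sym: "recomb P Q \<Longrightarrow> recomb Q P"
  unfolding recomb_def
proof (elim conjE bexE)
  fix A B C D
  assume move: "P \<noteq> Q" "A \<noteq> B" "C \<noteq> D" "A \<union> B = C \<union> D" "P - {A, B} = Q - {C, D}"
    and mem: "A \<in> P" "B \<in> P" "C \<in> Q" "D \<in> Q"
  show "Q \<noteq> P \<and> (\<exists>A\<in>Q. \<exists>B\<in>Q. \<exists>C\<in>P. \<exists>D\<in>P.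
      A \<noteq> B \<and> C \<noteq> D \<and> A \<union> B = C \<union> D \<and> Q - {A, B} = P - {C, D})"
    by (intro conjI bexI[OF _ mem(3)] bexI[OF _ mem(4)] bexI[OF _ mem(1)] bexI[OF _ mem(2)])
      (fact not_sym[OF move(1)] move(2,3) move(4,5)[symmetric])+
qed

lemma mod_eq_imp_eq_window:
  fixes x y a m :: int
  assumes "x mod m = y mod m" "a \<le> x" "x < a + m" "a \<le> y" "y < a + m"
  shows "x = y"
proof -
  obtain q where q: "x - y = m * q" using assms(1) by (metis dvdE mod_eq_dvd_iff)
  have "q = 0"
  proof (rule ccontr)
    assume "q \<noteq> 0"
    then have "\<bar>m * q\<bar> \<ge> m" using assms by (simp add: abs_mult mult_le_cancel_left1)
    then show False using q assms by linarith
  qed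
  then show ?thesis using q by simp
qed

lemma mod_neq_within_period:
  fixes a b k :: nat
  assumes "a < b" "b < a + k"
  shows "b mod k \<noteq> a mod k"
proof
  assume "b mod k = a mod k"
  then have "k dvd b - a" using mod_eq_dvd_iff_nat[of a b k] assms by simp
  then show False using assms nat_dvd_not_less[of "b - a" k] by simp
qed

lemma mono_seq_locate:
  fixes g :: "nat \<Rightarrow> 'b::linorder"
  assumes "\<And>j. g j \<le> g (Suc j)"
  shows "g 0 \<le> x \<Longrightarrow> x < g m \<Longrightarrow> \<exists>j<m. g j \<le> x \<and> x < g (Suc j)"
proof (induction m)
  case (Suc m)
  then show ?case by (cases "x < g m") (auto intro: less_SucI)
qed simp

lemma Union_consecutive_ivls:
  fixes f :: "nat \<Rightarrow> 'b::linorder"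
  assumes "\<And>j. f j \<le> f (Suc j)"
  shows "(\<Union>j<q. {f j..<f (Suc j)}) = {f 0..<f q}"
proof (induction q)
  case (Suc q)
  have "f 0 \<le> f q" using assms by (induction q) (auto intro: order_trans)
  then show ?case using Suc assms[of q] by (auto simp: lessThan_Suc)
qed simp

lemma min_diff_bounds:
  fixes A B a b d :: int
  assumes "1 \<le> d + A - B" "\<bar>a - b\<bar> \<le> d - 1"
  shows "1 \<le> d + min A a - min B b"
    and "min A a - min B b \<le> A - B \<or> min A a - min B b \<le> d - 1"
  using assms by (auto simp: min_def abs_le_iff)

section \<open>Positions on the Hamilton cycle\<close>

locale cycle_districting =
  fixes V :: "'a set" and E :: "'a \<Rightarrow> 'a \<Rightarrow> bool" and C :: "'a list" and k :: nat and s :: real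
  assumes simple: "simple_graph V E" and hamilton: "hamilton_cycle V E C" and k_pos: "k \<ge> 1"
    and k_dvd: "k dvd card V" and s_ge: "s \<ge> real (card V) / real k"
begin

definition n :: nat where "n = length C"
definition d :: nat where "d = card V div k"
definition vtx :: "int \<Rightarrow> 'a" where "vtx x = C ! nat (x mod int n)"

lemma n_eq_card: "n = card V"
  using hamilton unfolding hamilton_cycle_def n_def by (metis distinct_card)

lemma n_ge_3: "n \<ge> 3" using hamilton unfolding hamilton_cycle_def n_def by auto

lemma n_eq_k_d: "n = k * d"
  using k_dvd unfolding n_eq_card d_def by simp

lemma d_pos: "d \<ge> 1" using n_eq_k_d n_ge_3 by (cases d) auto

lemma card_div_k: "real (card V) / real k = real d"
  using n_eq_k_d k_pos n_eq_card by (simp add: field_simps)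

lemma s_ge_d: "real d \<le> s" using s_ge card_div_k by simp

lemma finite_V: "finite V" using simple unfolding simple_graph_def by auto

lemma E_sym: "E u v \<Longrightarrow> E v u" using simple unfolding simple_graph_def by auto

lemma vtx_add_n: "vtx (x + int n) = vtx x" unfolding vtx_def by simp

lemma vtx_in_V: "vtx x \<in> V"
proof -
  have "0 \<le> x mod int n" "x mod int n < int n" using n_ge_3 by simp_all
  then have "nat (x mod int n) < length C" unfolding n_def
    by (simp add: nat_less_iff)
  then show ?thesis using hamilton unfolding vtx_def hamilton_cycle_def by auto
qed

lemma vtx_eq_iff: "vtx x = vtx y \<longleftrightarrow> x mod int n = y mod int n"
proof
  assume h: "vtx x = vtx y"
  have b: "0 \<le> x mod int n" "x mod int n < int n" "0 \<le> y mod int n" "y mod int n < int n"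
    using n_ge_3 by simp_all
  then have "nat (x mod int n) < length C" "nat (y mod int n) < length C" unfolding n_def
    by (simp_all add: nat_less_iff)
  then have "nat (x mod int n) = nat (y mod int n)"
    using hamilton h unfolding vtx_def hamilton_cycle_def 
    by (simp add: nth_eq_iff_index_eq)
  then show "x mod int n = y mod int n" using b(1,3) by simp
qed (simp add: vtx_def)

lemma inj_on_vtx: "inj_on vtx {a..<a + int n}"
  unfolding inj_on_def vtx_eq_iff using mod_eq_imp_eq_window[where m="int n"] by auto

lemma vtx_eq_in_window:
  "vtx x = vtx y \<Longrightarrow> a \<le> x \<Longrightarrow> x < a + int n \<Longrightarrow> a \<le> y \<Longrightarrow> y < a + int n \<Longrightarrow> x = y"
  using inj_onD[OF inj_on_vtx] by auto

lemma vtx_image_window: "vtx ` {a..<a + int n} = V"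
proof -
  have sub: "vtx ` {a..<a + int n} \<subseteq> V" using vtx_in_V by auto
  have "card (vtx ` {a..<a + int n}) = n" using inj_on_vtx by (simp add: card_image)
  then show ?thesis using sub finite_V n_eq_card by (metis card_subset_eq)
qed

lemma vtx_add_nat: "vtx (a + int t) = C ! ((nat (a mod int n) + t) mod n)"
proof -
  have "int ((nat (a mod int n) + t) mod n) = (a mod int n + int t) mod int n"
    using n_ge_3 by (simp add: of_nat_mod)
  also have "\<dots> = (a + int t) mod int n" by (simp add: mod_add_left_eq)
  finally have "nat ((a + int t) mod int n) = (nat (a mod int n) + t) mod n" by simp
  then show ?thesis unfolding vtx_def by simp
qed

lemma vtx_edge: "E (vtx x) (vtx (x + 1))"
proof -
  have i: "nat (x mod int n) < n" using n_ge_3 by (simp add: nat_less_iff)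
  have "E (C ! nat (x mod int n)) (C ! ((nat (x mod int n) + 1) mod n))"
    using hamilton i unfolding hamilton_cycle_def n_def by auto
  moreover have "vtx (x + 1) = C ! ((nat (x mod int n) + 1) mod n)"
    using vtx_add_nat[of x 1] by simp
  ultimately show ?thesis unfolding vtx_def by simp
qed

lemma vtx_image_shift: "x mod int n = y mod int n \<Longrightarrow> vtx ` {x..<x + l} = vtx ` {y..<y + l}"
proof -
  assume h: "x mod int n = y mod int n"
  have e: "vtx (x + u) = vtx (y + u)" for u
    unfolding vtx_eq_iff using h by (metis mod_add_left_eq)
  have "vtx ` {x..<x + l} = (\<lambda>u. vtx (x + u)) ` {0..<l}"
    by (auto simp: image_iff intro!: bexI[where x="_ - x"])
  moreover have "vtx ` {y..<y + l} = (\<lambda>u. vtx (y + u)) ` {0..<l}"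
    by (auto simp: image_iff intro!: bexI[where x="_ - y"])
  ultimately show ?thesis using e by simp
qed

lemma card_vtx_image: "0 \<le> l \<Longrightarrow> l \<le> int n \<Longrightarrow> card (vtx ` {a..<a + l}) = nat l"
proof -
  assume "0 \<le> l" "l \<le> int n"
  then have "{a..<a+l} \<subseteq> {a..<a + int n}" by auto
  then have "inj_on vtx {a..<a + l}" using inj_on_subset inj_on_vtx by blast
  then show ?thesis by (simp add: card_image)
qed

lemma induces_connected_arc: "induces_connected E (vtx ` {a..<b})"
proof -
  let ?U = "vtx ` {a..<b}"
  let ?R = "\<lambda>x y. x \<in> ?U \<and> y \<in> ?U \<and> E x y"
  have fwd: "?R\<^sup>*\<^sup>* (vtx x) (vtx (x + int m))" if "a \<le> x" "x + int m < b" for x m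
    using that
  proof (induction m)
    case 0 then show ?case by simp
  next
    case (Suc m)
    then have "?R\<^sup>*\<^sup>* (vtx x) (vtx (x + int m))" by simp
    moreover have "?R (vtx (x + int m)) (vtx (x + int m + 1))"
      using Suc.prems vtx_edge[of "x + int m"] by auto
    ultimately have r: "?R\<^sup>*\<^sup>* (vtx x) (vtx (x + int m + 1))"
      by (rule rtranclp.rtrancl_into_rtrancl)
    have e: "x + int (Suc m) = x + int m + 1" by simp
    show ?case unfolding e by (rule r)
  qed
  have sym: "symp ?R\<^sup>*\<^sup>*"
    by (rule symp_rtranclp) (auto intro: sympI E_sym)
  have "?R\<^sup>*\<^sup>* (vtx x) (vtx y)" if "x \<in> {a..<b}" "y \<in> {a..<b}" for x y
  proof (cases "x \<le> y")
    case True
    then show ?thesis using fwd[of x "nat (y - x)"] that by auto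
  next
    case False
    then show ?thesis using fwd[of y "nat (x - y)"] that sympD[OF sym] by auto
  qed
  then show ?thesis unfolding induces_connected_def by auto
qed

section \<open>Partitions given by cut sequences\<close>

definition cuts :: "(nat \<Rightarrow> int) \<Rightarrow> bool" where
  "cuts f \<longleftrightarrow> (\<forall>j. f (j + k) = f j + int n) \<and> (\<forall>j. f j < f (Suc j))
     \<and> (\<forall>j. real_of_int (f (Suc j) - f j) \<le> real d + s)"

definition district :: "(nat \<Rightarrow> int) \<Rightarrow> nat \<Rightarrow> 'a set" where
  "district f j = vtx ` {f j..<f (Suc j)}"

definition cut_partition :: "(nat \<Rightarrow> int) \<Rightarrow> 'a set set" where
  "cut_partition f = district f ` {0..<k}"

lemma cuts_period: "cuts f \<Longrightarrow> f (j + k) = f j + int n"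
  unfolding cuts_def by auto

lemma cuts_step: "cuts f \<Longrightarrow> f j < f (Suc j)"
  unfolding cuts_def by auto

lemma cuts_gap: "cuts f \<Longrightarrow> real_of_int (f (Suc j) - f j) \<le> real d + s"
  unfolding cuts_def by auto

lemma cuts_less: "cuts f \<Longrightarrow> i < j \<Longrightarrow> f i < f j"
  using lift_Suc_mono_less[of f] cuts_step by blast

lemma cuts_le: "cuts f \<Longrightarrow> i \<le> j \<Longrightarrow> f i \<le> f j"
  using cuts_less[of f i j] by (cases "i = j") auto

lemma cuts_period_mult: "cuts f \<Longrightarrow> f (j + q * k) = f j + int q * int n"
proof (induction q)
  case 0 then show ?case by simp
next
  case (Suc q)
  have "f (j + Suc q * k) = f ((j + q * k) + k)" by (simp add: algebra_simps)
  also have "\<dots> = f (j + q * k) + int n" using Suc.prems cuts_period by blast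
  finally show ?case using Suc by (simp add: algebra_simps)
qed

lemma cuts_mod: "cuts f \<Longrightarrow> f j = f (j mod k) + int (j div k) * int n"
  using cuts_period_mult[of f "j mod k" "j div k"] by simp

lemma cuts_step_le_n: "cuts f \<Longrightarrow> f (Suc j) \<le> f j + int n"
proof -
  assume v: "cuts f"
  have "f (Suc j) \<le> f (j + k)" using k_pos cuts_le[OF v] by simp
  then show ?thesis using cuts_period[OF v] by simp
qed

lemma district_period: "cuts f \<Longrightarrow> district f (j + k) = district f j"
proof -
  assume v: "cuts f"
  have a: "f (j + k) = f j + int n" and b: "f (Suc j + k) = f (Suc j) + int n"
    using cuts_period[OF v] by blast+
  have "vtx ` {f j + int n..<f j + int n + (f (Suc j) - f j)} = vtx ` {f j..<f j + (f (Suc j) - f j)}"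
    by (rule vtx_image_shift) simp
  then show ?thesis unfolding district_def using a b by (simp add: add.commute)
qed

lemma vtx_in_district: "cuts f \<Longrightarrow> vtx (f j) \<in> district f j"
  unfolding district_def using cuts_step by auto

lemma card_district: "cuts f \<Longrightarrow> card (district f j) = nat (f (Suc j) - f j)"
proof -
  assume v: "cuts f"
  have "card (vtx ` {f j..<f j + (f (Suc j) - f j)}) = nat (f (Suc j) - f j)"
    using cuts_step[OF v, of j] cuts_step_le_n[OF v, of j] by (intro card_vtx_image) auto
  then show ?thesis unfolding district_def by simp
qed

lemma district_disjoint_aux:
  assumes v: "cuts f" and ij: "m \<le> i" "i < j" "j < m + k"
  shows "district f i \<inter> district f j = {}"
proof (rule ccontr)
  assume "district f i \<inter> district f j \<noteq> {}"
  then obtain x y where x: "f i \<le> x" "x < f (Suc i)" and y: "f j \<le> y" "y < f (Suc j)"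
    and e: "vtx x = vtx y" unfolding district_def by auto
  have "f m \<le> f i" using cuts_le[OF v] ij by simp
  moreover have "f (Suc j) \<le> f (m + k)" using cuts_le[OF v] ij by simp
  moreover have "f (Suc i) \<le> f j" using cuts_le[OF v] ij by simp
  moreover have "f (m + k) = f m + int n" using cuts_period[OF v] by blast
  ultimately have "x = y" using mod_eq_imp_eq_window[of x "int n" y "f m"] e vtx_eq_iff x y by force
  then show False using x y \<open>f (Suc i) \<le> f j\<close> by simp
qed

lemma district_disjoint:
  assumes v: "cuts f" and "i \<in> {m..<m+k}" "j \<in> {m..<m+k}" "i \<noteq> j"
  shows "district f i \<inter> district f j = {}"
  using assms district_disjoint_aux[OF v, of m i j] district_disjoint_aux[OF v, of m j i]
  by (cases "i < j") (auto simp: Int_commute)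

lemma inj_on_district: "cuts f \<Longrightarrow> inj_on (district f) {m..<m+k}"
  unfolding inj_on_def using district_disjoint vtx_in_district by fastforce

lemma district_image_window: "cuts f \<Longrightarrow> district f ` {m..<m+k} = cut_partition f"
proof (induction m)
  case 0 then show ?case unfolding cut_partition_def by simp
next
  case (Suc m)
  have "{m..<m+k} = insert m {Suc m..<m+k}" using k_pos by auto
  moreover have "{Suc m..<Suc m+k} = insert (m + k) {Suc m..<m+k}" using k_pos by auto
  moreover have "district f (m + k) = district f m" using district_period[OF Suc.prems] by simp
  ultimately have "district f ` {Suc m..<Suc m+k} = district f ` {m..<m+k}" by simp
  then show ?case using Suc by simp
qed

lemma cuts_shift: "cuts f \<Longrightarrow> cuts (\<lambda>j. f (j + m))"
proof -
  assume v: "cuts f"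
  have "f (j + k + m) = f (j + m) + int n" for j using cuts_period[OF v, of "j + m"]
    by (simp add: ac_simps)
  moreover have "f (j + m) < f (Suc j + m)" for j using cuts_step[OF v, of "j + m"] by simp
  moreover have "real_of_int (f (Suc j + m) - f (j + m)) \<le> real d + s" for j
    using cuts_gap[OF v, of "j + m"] by simp
  ultimately show ?thesis unfolding cuts_def by simp
qed

lemma cut_partition_shift: "cuts f \<Longrightarrow> cut_partition (\<lambda>j. f (j + m)) = cut_partition f"
proof -
  assume v: "cuts f"
  have "district (\<lambda>j. f (j + m)) j = district f (j + m)" for j unfolding district_def by simp
  then have "cut_partition (\<lambda>j. f (j + m)) = (\<lambda>j. district f (j + m)) ` {0..<k}"
    unfolding cut_partition_def by simp
  also have "\<dots> = district f ` ((\<lambda>j. j + m) ` {0..<k})" by (simp only: image_image)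
  also have "(\<lambda>j. j + m) ` {0..<k} = {m..<m+k}"
  proof
    show "{m..<m + k} \<subseteq> (\<lambda>j. j + m) ` {0..<k}"
    proof
      fix x assume "x \<in> {m..<m+k}"
      then have "x = (x - m) + m" "x - m \<in> {0..<k}" by auto
      then show "x \<in> (\<lambda>j. j + m) ` {0..<k}" by blast
    qed
  qed auto
  finally show ?thesis using district_image_window[OF v] by simp
qed

lemma Union_cut_partition: "cuts f \<Longrightarrow> \<Union> (cut_partition f) = V"
proof -
  assume v: "cuts f"
  have "\<Union> (cut_partition f) = vtx ` (\<Union>j<k. {f j..<f (Suc j)})"
    unfolding cut_partition_def district_def by (auto simp: atLeast0LessThan)
  also have "(\<Union>j<k. {f j..<f (Suc j)}) = {f 0..<f k}"
    using cuts_step[OF v] by (intro Union_consecutive_ivls) (simp add: less_imp_le)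
  also have "f k = f 0 + int n" using cuts_period[OF v, of 0] by simp
  finally show ?thesis using vtx_image_window by simp
qed

lemma vtx_arc_eq_consecutive:
  "vtx ` {a..<a + int l} = {C ! ((nat (a mod int n) + t) mod length C) | t. t < l}"
proof -
  have "vtx ` {a..<a + int l} = (\<lambda>t. vtx (a + int t)) ` {..<l}"
  proof
    show "vtx ` {a..<a + int l} \<subseteq> (\<lambda>t. vtx (a + int t)) ` {..<l}"
    proof
      fix y assume "y \<in> vtx ` {a..<a + int l}"
      then obtain x where "a \<le> x" "x < a + int l" "y = vtx x" by auto
      then show "y \<in> (\<lambda>t. vtx (a + int t)) ` {..<l}"
        by (intro image_eqI[where x="nat (x - a)"]) auto
    qed
  qed auto
  then show ?thesis using vtx_add_nat unfolding n_def by auto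
qed

lemma consecutive_on_vtx_arc:
  assumes "0 \<le> l" "l \<le> int n"
  shows "consecutive_on C (vtx ` {a..<a + l})"
proof -
  have "0 \<le> a mod int n" "a mod int n < int n" using n_ge_3 by simp_all
  then have "nat (a mod int n) < length C" unfolding n_def by (simp add: nat_less_iff)
  moreover have "nat l \<le> length C" using assms unfolding n_def by simp
  ultimately show ?thesis
    using vtx_arc_eq_consecutive[of a "nat l"] assms unfolding consecutive_on_def by auto
qed

lemma consecutive_on_imp_vtx_arc:
  assumes "consecutive_on C U"
  obtains a l where "0 \<le> l" "l \<le> int n" "U = vtx ` {a..<a + l}"
proof -
  obtain i l where il: "i < length C" "l \<le> length C"
    "U = {C ! ((i + t) mod length C) | t. t < l}"
    using assms unfolding consecutive_on_def by blast
  then have "U = vtx ` {int i..<int i + int l}"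
    using vtx_arc_eq_consecutive[of "int i" l] unfolding n_def by simp
  then show ?thesis using il(2) by (intro that[where a="int i" and l="int l"]) (auto simp: n_def)
qed

lemma consecutive_district: "cuts f \<Longrightarrow> consecutive_on C (district f j)"
  using consecutive_on_vtx_arc[of "f (Suc j) - f j" "f j"] cuts_step[of f j] cuts_step_le_n[of f j]
  unfolding district_def by simp

lemma cut_partition_Canon: "cuts f \<Longrightarrow> cut_partition f \<in> Canon V E C s k"
proof -
  assume v: "cuts f"
  have cardp: "card (cut_partition f) = k" unfolding cut_partition_def
    using card_image[OF inj_on_district[OF v, of 0]] by simp
  have disj: "\<forall>U\<in>cut_partition f. \<forall>W\<in>cut_partition f. U \<noteq> W \<longrightarrow> U \<inter> W = {}"
  proof (intro ballI impI)
    fix U W assume "U \<in> cut_partition f" "W \<in> cut_partition f" "U \<noteq> W"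
    then obtain i j where "i \<in> {0..<k}" "j \<in> {0..<k}" "U = district f i" "W = district f j"
      unfolding cut_partition_def by blast
    moreover then have "i \<noteq> j" using \<open>U \<noteq> W\<close> by auto
    ultimately show "U \<inter> W = {}" using district_disjoint[OF v, of i 0 j] by simp
  qed
  have ne: "\<forall>U\<in>cut_partition f. U \<noteq> {}" unfolding cut_partition_def using vtx_in_district[OF v] by auto
  have conn: "\<forall>U\<in>cut_partition f. induces_connected E U"
    unfolding cut_partition_def district_def using induces_connected_arc by auto
  have bal: "\<forall>U\<in>cut_partition f. \<bar>real (card U) - real (card V) / real k\<bar> \<le> s"
  proof
    fix U assume "U \<in> cut_partition f"
    then obtain j where U: "U = district f j" unfolding cut_partition_def by auto
    have cu: "real (card U) = real_of_int (f (Suc j) - f j)"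
      using card_district[OF v, of j] cuts_step[OF v, of j] U by simp
    have "1 \<le> f (Suc j) - f j" using cuts_step[OF v, of j] by simp
    then show "\<bar>real (card U) - real (card V) / real k\<bar> \<le> s"
      using cu cuts_gap[OF v, of j] card_div_k s_ge_d by (simp add: abs_le_iff)
  qed
  have "connected_partition V E k (cut_partition f)"
    unfolding connected_partition_def using cardp disj ne conn Union_cut_partition[OF v]
    by (simp add: cut_partition_def)
  then show ?thesis unfolding Canon_def Bal_def canonical_def
    using bal consecutive_district[OF v] cut_partition_def by auto
qed

section \<open>Moving a single cut\<close>

definition canon_move :: "'a set set \<Rightarrow> 'a set set \<Rightarrow> bool" where
  "canon_move X Y \<longleftrightarrow> X \<in> Canon V E C s k \<and> Y \<in> Canon V E C s k \<and> R_edge V E s k X Y"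

abbreviation reach :: "nat \<Rightarrow> 'a set set \<Rightarrow> 'a set set \<Rightarrow> bool" where
  "reach \<equiv> reachable_within canon_move"

lemma symp_canon_move: "symp canon_move"
  unfolding canon_move_def R_edge_def by (auto intro: sympI recomb_sym)

lemma district_Un_Suc:
  "cuts f \<Longrightarrow> district f j \<union> district f (Suc j) = vtx ` {f j..<f (Suc (Suc j))}"
proof -
  assume v: "cuts f"
  have "{f j..<f (Suc j)} \<union> {f (Suc j)..<f (Suc (Suc j))} = {f j..<f (Suc (Suc j))}"
    using cuts_step[OF v, of j] cuts_step[OF v, of "Suc j"] by auto
  then show ?thesis unfolding district_def by (metis image_Un)
qed

lemma district_neq_Suc:
  assumes v: "cuts f" and k2: "k \<ge> 2"
  shows "district f j \<noteq> district f (Suc j)"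
proof
  assume "district f j = district f (Suc j)"
  then have "vtx (f (Suc j)) \<in> district f j \<inter> district f (Suc j)"
    using vtx_in_district[OF v] by simp
  moreover have "j \<in> {j..<j + k}" "Suc j \<in> {j..<j + k}" using k2 by auto
  ultimately show False using district_disjoint[OF v, of j j "Suc j"] by auto
qed

text \<open>Moving the cut f i (and its translates by multiples of k) only changes the two
districts i - 1 and i, whose union stays the same arc.\<close>

lemma one_cut_move:
  assumes vf: "cuts f" and vg: "cuts g" and k2: "k \<ge> 2" and i1: "1 \<le> i"
    and same: "\<forall>j. j mod k \<noteq> i mod k \<longrightarrow> g j = f j"
  shows "reach 1 (cut_partition f) (cut_partition g)"
proof (cases "cut_partition f = cut_partition g")
  case True then show ?thesis using reachable_within_refl by simp
next
  case False
  let ?W = "{i - 1..<i - 1 + k}"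
  have Pf: "cut_partition f = district f ` ?W" and Pg: "cut_partition g = district g ` ?W"
    using district_image_window[OF vf] district_image_window[OF vg] by auto
  have si: "Suc (i - 1) = i" using i1 by simp
  have "i mod k \<noteq> (i - 1) mod k" using mod_neq_within_period[of "i - 1" i] k2 i1 by simp
  then have im1: "g (i - 1) = f (i - 1)" using same by metis
  have ip1: "g (Suc i) = f (Suc i)" using same mod_neq_within_period[of i "Suc i"] k2 by auto
  have mem: "i - 1 \<in> ?W" "i \<in> ?W" using k2 i1 by auto
  have union: "district f (i - 1) \<union> district f i = district g (i - 1) \<union> district g i"
    using district_Un_Suc[OF vf, of "i - 1"] district_Un_Suc[OF vg, of "i - 1"] si im1 ip1
    by simp
  have others: "district f j = district g j" if "j \<in> ?W - {i - 1, i}" for j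
  proof -
    have "i < j" "Suc j < i + k" using that i1 by auto
    then have "j mod k \<noteq> i mod k" "Suc j mod k \<noteq> i mod k"
      using mod_neq_within_period[of i j] mod_neq_within_period[of i "Suc j"] by auto
    then show ?thesis using same unfolding district_def by simp
  qed
  have sub: "{i - 1, i} \<subseteq> ?W" "?W - {i - 1, i} \<subseteq> ?W" using mem by auto
  have "cut_partition f - {district f (i - 1), district f i}
      = district f ` ?W - district f ` {i - 1, i}" using Pf by simp
  also have "\<dots> = district f ` (?W - {i - 1, i})"
    by (rule inj_on_image_set_diff[OF inj_on_district[OF vf] sub(2) sub(1), symmetric])
  also have "\<dots> = district g ` (?W - {i - 1, i})" using others by (rule image_cong[OF refl])
  also have "\<dots> = district g ` ?W - district g ` {i - 1, i}"
    by (rule inj_on_image_set_diff[OF inj_on_district[OF vg] sub(2) sub(1)])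
  also have "\<dots> = cut_partition g - {district g (i - 1), district g i}" using Pg by simp
  finally have rest: "cut_partition f - {district f (i - 1), district f i}
      = cut_partition g - {district g (i - 1), district g i}" .
  have "recomb (cut_partition f) (cut_partition g)"
    unfolding recomb_def
    using False union rest mem Pf Pg district_neq_Suc[OF vf k2, of "i - 1"]
      district_neq_Suc[OF vg k2, of "i - 1"] si
    by (metis imageI)
  then have "canon_move (cut_partition f) (cut_partition g)"
    using cut_partition_Canon[OF vf] cut_partition_Canon[OF vg]
    unfolding canon_move_def R_edge_def Canon_def by simp
  then show ?thesis by (rule reachable_within_step)
qed

section \<open>Descent to equally spaced cuts\<close>

lemma int_n_eq: "int n = int k * int d" using n_eq_k_d by simp

lemma gap_le_2d_le: "x \<le> 2 * int d - 1 \<Longrightarrow> real_of_int x \<le> real d + s"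
proof -
  assume "x \<le> 2 * int d - 1"
  then have "real_of_int x \<le> real_of_int (2 * int d - 1)" by (simp only: of_int_le_iff)
  then show ?thesis using s_ge_d by simp
qed

definition defect :: "(nat \<Rightarrow> int) \<Rightarrow> nat \<Rightarrow> int" where
  "defect f j = f j - f 0 - int j * int d"

lemma defect_0: "defect f 0 = 0" unfolding defect_def by simp

lemma defect_mod: "cuts f \<Longrightarrow> defect f j = defect f (j mod k)"
proof -
  assume v: "cuts f"
  have "f j = f (j mod k) + int (j div k) * int n" using cuts_mod[OF v] by blast
  moreover have "int j = int (j mod k) + int (j div k) * int k"
    by (metis of_nat_add of_nat_mult mod_div_mult_eq)
  ultimately show ?thesis unfolding defect_def int_n_eq by (simp add: algebra_simps)
qed

lemma cuts_gap_defect: "f (Suc j) - f j = int d + defect f (Suc j) - defect f j"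
  unfolding defect_def by (simp add: algebra_simps)

lemma defect_upper:
  assumes v: "cuts f" and "r \<le> k"
  shows "defect f r \<le> int (k - r) * (int d - 1)"
proof -
  have "defect f (k - u) \<le> int u * (int d - 1)" if "u \<le> k" for u
    using that
  proof (induction u)
    case 0
    then show ?case using cuts_period[OF v, of 0] int_n_eq unfolding defect_def by simp
  next
    case (Suc u)
    then have "defect f (Suc (k - Suc u)) \<le> int u * (int d - 1)" by (simp add: Suc_diff_Suc)
    moreover have "1 \<le> f (Suc (k - Suc u)) - f (k - Suc u)"
      using cuts_step[OF v, of "k - Suc u"] by simp
    ultimately show ?case using cuts_gap_defect[of f "k - Suc u"] by (simp add: algebra_simps)
  qed
  then show ?thesis using \<open>r \<le> k\<close> by (metis diff_diff_cancel diff_le_self)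
qed

text \<open>Capping the defect by a periodic profile a whose steps are below d keeps every gap
between 1 and the larger of the original gap and 2d - 1.\<close>

definition capped :: "(nat \<Rightarrow> int) \<Rightarrow> (nat \<Rightarrow> int) \<Rightarrow> nat \<Rightarrow> int" where
  "capped f a j = f 0 + int j * int d + min (defect f j) (a j)"

lemma cuts_capped:
  assumes v: "cuts f" and per: "\<forall>j. a (j + k) = a j"
    and lip: "\<forall>j. \<bar>a (Suc j) - a j\<bar> \<le> int d - 1"
  shows "cuts (capped f a)"
proof -
  have period: "capped f a (j + k) = capped f a j + int n" for j
  proof -
    have "defect f (j + k) = defect f j"
      using defect_mod[OF v, of "j + k"] defect_mod[OF v, of j] by simp
    then show ?thesis unfolding capped_def using per int_n_eq by (simp add: algebra_simps)
  qed
  have gaps: "capped f a j < capped f a (Suc j)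
      \<and> real_of_int (capped f a (Suc j) - capped f a j) \<le> real d + s" for j
  proof -
    have g: "capped f a (Suc j) - capped f a j
        = int d + min (defect f (Suc j)) (a (Suc j)) - min (defect f j) (a j)"
      unfolding capped_def by (simp add: algebra_simps)
    have h1: "1 \<le> int d + defect f (Suc j) - defect f j"
      using cuts_step[OF v, of j] cuts_gap_defect[of f j] by simp
    have r: "real_of_int (int d + defect f (Suc j) - defect f j) \<le> real d + s"
      using cuts_gap[OF v, of j] cuts_gap_defect[of f j] by simp
    note m = min_diff_bounds[OF h1 lip[rule_format, of j]]
    have "real_of_int (capped f a (Suc j) - capped f a j) \<le> real d + s"
      using m(2)
    proof
      assume "min (defect f (Suc j)) (a (Suc j)) - min (defect f j) (a j)
          \<le> defect f (Suc j) - defect f j"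
      then have "capped f a (Suc j) - capped f a j \<le> int d + defect f (Suc j) - defect f j"
        using g by simp
      then show ?thesis using r by (smt (verit) of_int_le_iff)
    next
      assume "min (defect f (Suc j)) (a (Suc j)) - min (defect f j) (a j) \<le> int d - 1"
      then show ?thesis using g by (intro gap_le_2d_le) simp
    qed
    then show ?thesis using g m(1) by simp
  qed
  show ?thesis unfolding cuts_def using period gaps by blast
qed

definition equal_cuts :: "int \<Rightarrow> nat \<Rightarrow> int" where
  "equal_cuts x j = x + int j * int d"

lemma cuts_equal_cuts: "cuts (equal_cuts x)"
  unfolding cuts_def equal_cuts_def int_n_eq using d_pos gap_le_2d_le[of "int d"]
  by (simp add: algebra_simps)

lemma capped_top:
  assumes v: "cuts f" and nonneg: "\<forall>j. 0 \<le> defect f j"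
  shows "capped f (\<lambda>_. int (k - 1) * (int d - 1)) = f"
proof
  fix j
  have "defect f j \<le> int (k - 1) * (int d - 1)"
  proof (cases "j mod k = 0")
    case True
    then show ?thesis using defect_mod[OF v, of j] defect_0 d_pos k_pos by simp
  next
    case False
    have "defect f (j mod k) \<le> int (k - j mod k) * (int d - 1)"
      using defect_upper[OF v] k_pos by (simp add: less_imp_le)
    also have "\<dots> \<le> int (k - 1) * (int d - 1)"
      using False d_pos by (intro mult_right_mono) auto
    finally show ?thesis using defect_mod[OF v, of j] by simp
  qed
  then show "capped f (\<lambda>_. int (k - 1) * (int d - 1)) j = f j"
    unfolding capped_def defect_def by simp
qed

lemma capped_bottom:
  assumes "\<forall>j. 0 \<le> defect f j"
  shows "capped f (\<lambda>_. 0) = equal_cuts (f 0)"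
  using assms unfolding capped_def equal_cuts_def by (simp add: fun_eq_iff)

definition lowered :: "nat \<Rightarrow> int \<Rightarrow> int \<Rightarrow> nat \<Rightarrow> int" where
  "lowered t L L' j = (if 1 \<le> j mod k \<and> j mod k \<le> t then L' else L)"

lemma lower_prefix:
  assumes v: "cuts f" and k2: "k \<ge> 2" and L: "0 \<le> L'" "L' \<le> L" "L - L' \<le> int d - 1"
  shows "t \<le> k - 1 \<Longrightarrow>
    reach t (cut_partition (capped f (\<lambda>_. L))) (cut_partition (capped f (lowered t L L')))"
proof (induction t)
  case 0
  have "lowered 0 L L' = (\<lambda>_. L)" unfolding lowered_def by auto
  then show ?case using reachable_within_refl by simp
next
  case (Suc t)
  have cuts_lowered: "cuts (capped f (lowered t' L L'))" for t'
    by (rule cuts_capped[OF v]) (use L in \<open>auto simp: lowered_def\<close>)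
  have t_mod: "Suc t mod k = Suc t" using Suc.prems k2 by simp
  have "\<forall>j. j mod k \<noteq> Suc t mod k \<longrightarrow>
      capped f (lowered (Suc t) L L') j = capped f (lowered t L L') j"
    unfolding t_mod capped_def lowered_def by auto
  then have "reach 1 (cut_partition (capped f (lowered t L L')))
      (cut_partition (capped f (lowered (Suc t) L L')))"
    by (intro one_cut_move[OF cuts_lowered cuts_lowered k2]) auto
  then show ?case using Suc reachable_within_trans by fastforce
qed

text \<open>Stage u lowers the cap from (k - 1 - u)(d - 1) by d - 1. Only the cuts 1, ..., u + 1
can be affected, since defect f r \<le> (k - r)(d - 1) for the others.\<close>

lemma descend_levels:
  assumes v: "cuts f" and k2: "k \<ge> 2" and nonneg: "\<forall>j. 0 \<le> defect f j"
  shows "u \<le> k - 1 \<Longrightarrow> reach (\<Sum>{0..u}) (cut_partition f)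
    (cut_partition (capped f (\<lambda>_. int (k - 1 - u) * (int d - 1))))"
proof (induction u)
  case 0
  then show ?case using capped_top[OF v nonneg] reachable_within_refl by simp
next
  case (Suc u)
  define L where "L = int (k - 1 - u) * (int d - 1)"
  define L' where "L' = int (k - 1 - Suc u) * (int d - 1)"
  have kk: "int (k - 1 - u) = int (k - 1 - Suc u) + 1" using Suc.prems by simp
  have LL: "L = L' + (int d - 1)" unfolding L_def L'_def kk by (simp add: algebra_simps)
  have L'0: "0 \<le> L'" unfolding L'_def using d_pos by simp
  have stage: "reach (Suc u) (cut_partition (capped f (\<lambda>_. L)))
      (cut_partition (capped f (lowered (Suc u) L L')))"
    using lower_prefix[OF v k2 L'0, of L "Suc u"] LL Suc.prems d_pos by simp
  have "capped f (lowered (Suc u) L L') = capped f (\<lambda>_. L')"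
  proof (rule ext)
    fix j
    let ?r = "j mod k"
    have Dj: "defect f j = defect f ?r" using defect_mod[OF v] by simp
    consider "1 \<le> ?r \<and> ?r \<le> Suc u" | "?r = 0" | "Suc (Suc u) \<le> ?r" by linarith
    then show "capped f (lowered (Suc u) L L') j = capped f (\<lambda>_. L') j"
    proof cases
      case 2
      then have "defect f j = 0" using Dj defect_0 by simp
      then show ?thesis unfolding capped_def lowered_def using L'0 LL d_pos by (simp add: min_def)
    next
      case 3
      have "defect f ?r \<le> int (k - ?r) * (int d - 1)" using defect_upper[OF v] k_pos by simp
      also have "\<dots> \<le> L'" unfolding L'_def using 3 d_pos by (intro mult_right_mono) auto
      finally have "defect f j \<le> L'" using Dj by simp
      then show ?thesis unfolding capped_def lowered_def using 3 LL d_pos by (simp add: min_def)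
    qed (simp add: capped_def lowered_def)
  qed
  then have "reach (Suc u) (cut_partition (capped f (\<lambda>_. L))) (cut_partition (capped f (\<lambda>_. L')))"
    using stage by simp
  then show ?case using Suc reachable_within_trans unfolding L_def L'_def
    by (fastforce simp: sum.atLeast0_atMost_Suc)
qed

lemma reach_equal_cuts:
  assumes v: "cuts f" and k2: "k \<ge> 2" and nonneg: "\<forall>j. 0 \<le> defect f j"
  shows "reach (\<Sum>{0..k - 1}) (cut_partition f) (cut_partition (equal_cuts (f 0)))"
  using descend_levels[OF v k2 nonneg, of "k - 1"] capped_bottom[OF nonneg] by simp

definition rotated :: "int \<Rightarrow> int \<Rightarrow> nat \<Rightarrow> nat \<Rightarrow> int" where
  "rotated x \<delta> t j = x + int j * int d + (if j mod k < t then \<delta> else 0)"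

lemma cuts_rotated:
  assumes "0 \<le> \<delta>" "\<delta> < int d"
  shows "cuts (rotated x \<delta> t)"
proof -
  have g: "rotated x \<delta> t (Suc j) - rotated x \<delta> t j
      = int d + (if Suc j mod k < t then \<delta> else 0) - (if j mod k < t then \<delta> else 0)" for j
    unfolding rotated_def by (simp add: algebra_simps)
  have gaps: "1 \<le> rotated x \<delta> t (Suc j) - rotated x \<delta> t j"
    "rotated x \<delta> t (Suc j) - rotated x \<delta> t j \<le> 2 * int d - 1" for j
    unfolding g using assms by auto
  have "rotated x \<delta> t (j + k) = rotated x \<delta> t j + int n" for j
    unfolding rotated_def int_n_eq by (simp add: algebra_simps)
  moreover have "rotated x \<delta> t j < rotated x \<delta> t (Suc j)" for j using gaps(1)[of j] by simp
  moreover have "real_of_int (rotated x \<delta> t (Suc j) - rotated x \<delta> t j) \<le> real d + s" for j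
    by (rule gap_le_2d_le[OF gaps(2)])
  ultimately show ?thesis unfolding cuts_def by blast
qed

lemma rotate_prefix:
  assumes k2: "k \<ge> 2" and \<delta>: "0 \<le> \<delta>" "\<delta> < int d"
  shows "t \<le> k \<Longrightarrow> reach t (cut_partition (rotated x \<delta> 0)) (cut_partition (rotated x \<delta> t))"
proof (induction t)
  case 0 then show ?case using reachable_within_refl by simp
next
  case (Suc t)
  define i where "i = (if t = 0 then k else t)"
  have i1: "1 \<le> i" unfolding i_def using k2 by auto
  have im: "i mod k = t" unfolding i_def using Suc.prems by auto
  have "\<forall>j. j mod k \<noteq> i mod k \<longrightarrow> rotated x \<delta> (Suc t) j = rotated x \<delta> t j"
    unfolding im rotated_def by auto
  then have "reach 1 (cut_partition (rotated x \<delta> t)) (cut_partition (rotated x \<delta> (Suc t)))"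
    by (intro one_cut_move[OF cuts_rotated[OF \<delta>] cuts_rotated[OF \<delta>] k2 i1]) auto
  then show ?case using Suc reachable_within_trans by fastforce
qed

lemma equal_cuts_rotate:
  assumes k2: "k \<ge> 2" and \<delta>: "0 \<le> \<delta>" "\<delta> < int d"
  shows "reach k (cut_partition (equal_cuts x)) (cut_partition (equal_cuts (x + \<delta>)))"
proof -
  have "rotated x \<delta> 0 = equal_cuts x" "rotated x \<delta> k = equal_cuts (x + \<delta>)"
    unfolding rotated_def equal_cuts_def using k2 by auto
  then show ?thesis using rotate_prefix[OF k2 \<delta>, of k x] by simp
qed

lemma cut_partition_equal_cuts_add_d:
  "cut_partition (equal_cuts (x + int d)) = cut_partition (equal_cuts x)"
proof -
  have "equal_cuts (x + int d) = (\<lambda>j. equal_cuts x (j + 1))"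
    unfolding equal_cuts_def by (auto simp: algebra_simps)
  then show ?thesis using cut_partition_shift[OF cuts_equal_cuts, of x 1] by simp
qed

lemma cut_partition_equal_cuts_add_mult_d:
  "cut_partition (equal_cuts (x + int q * int d)) = cut_partition (equal_cuts x)"
proof (induction q)
  case (Suc q)
  have e: "x + int (Suc q) * int d = (x + int q * int d) + int d" by (simp add: algebra_simps)
  show ?case unfolding e cut_partition_equal_cuts_add_d by (rule Suc.IH)
qed simp

lemma cut_partition_equal_cuts_mod_d:
  "cut_partition (equal_cuts y) = cut_partition (equal_cuts (x + (y - x) mod int d))"
proof -
  define q where "q = (y - x) div int d"
  have y: "y = x + (y - x) mod int d + q * int d" unfolding q_def
    by (metis add.commute diff_add_cancel mod_div_mult_eq add.assoc)
  show ?thesis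
  proof (cases "0 \<le> q")
    case True
    then have "y = (x + (y - x) mod int d) + int (nat q) * int d" using y by simp
    then show ?thesis using cut_partition_equal_cuts_add_mult_d[of "x + (y - x) mod int d" "nat q"]
      by simp
  next
    case False
    then have "x + (y - x) mod int d = y + int (nat (- q)) * int d" using y by simp
    then show ?thesis using cut_partition_equal_cuts_add_mult_d[of y "nat (- q)"] by simp
  qed
qed

lemma nonneg_defect_representative:
  assumes v: "cuts f"
  obtains g where "cuts g" "cut_partition g = cut_partition f" "\<forall>j. 0 \<le> defect g j"
proof -
  have fin: "finite (defect f ` {0..<k})" and ne: "defect f ` {0..<k} \<noteq> {}" using k_pos by auto
  obtain j0 where j0: "j0 \<in> {0..<k}" "defect f j0 = Min (defect f ` {0..<k})"
    using Min_in[OF fin ne] by auto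
  have min: "defect f j0 \<le> defect f j" for j
  proof -
    have "j mod k \<in> {0..<k}" using k_pos by auto
    then have "defect f j0 \<le> defect f (j mod k)" using j0 fin by simp
    then show ?thesis using defect_mod[OF v, of j] by simp
  qed
  have "defect (\<lambda>j. f (j + j0)) j = defect f (j + j0) - defect f j0" for j
    unfolding defect_def by (simp add: algebra_simps)
  then have "0 \<le> defect (\<lambda>j. f (j + j0)) j" for j using min[of "j + j0"] by simp
  then show ?thesis using that cuts_shift[OF v] cut_partition_shift[OF v] by blast
qed

section \<open>Canonical partitions come from cut sequences\<close>

context
  fixes P assumes P_Canon: "P \<in> Canon V E C s k" and k2: "k \<ge> 2"
begin

lemma card_P: "card P = k" and Union_P: "\<Union>P = V"
  and P_nonempty: "U \<in> P \<Longrightarrow> U \<noteq> {}"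
  and P_disjoint: "U \<in> P \<Longrightarrow> W \<in> P \<Longrightarrow> U \<noteq> W \<Longrightarrow> U \<inter> W = {}"
  and P_balanced: "U \<in> P \<Longrightarrow> \<bar>real (card U) - real (card V) / real k\<bar> \<le> s"
  and P_consecutive: "U \<in> P \<Longrightarrow> consecutive_on C U"
  using P_Canon unfolding Canon_def Bal_def canonical_def connected_partition_def by auto

lemma P_same: "U \<in> P \<Longrightarrow> W \<in> P \<Longrightarrow> v \<in> U \<Longrightarrow> v \<in> W \<Longrightarrow> U = W"
  using P_disjoint by blast

definition district_of :: "int \<Rightarrow> 'a set" where
  "district_of x = (THE U. U \<in> P \<and> vtx x \<in> U)"

lemma district_of: "district_of x \<in> P \<and> vtx x \<in> district_of x"
proof -
  obtain U where U: "U \<in> P" "vtx x \<in> U" using Union_P vtx_in_V by blast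
  have "\<exists>!U. U \<in> P \<and> vtx x \<in> U" using U P_same by blast
  then show ?thesis unfolding district_of_def by (rule theI')
qed

lemma district_of_unique: "U \<in> P \<Longrightarrow> vtx x \<in> U \<Longrightarrow> district_of x = U"
  using district_of P_same by blast

lemma card_P_member_less_n: "U \<in> P \<Longrightarrow> card U < n"
proof -
  assume U: "U \<in> P"
  have "\<not> P \<subseteq> {U}"
  proof
    assume "P \<subseteq> {U}"
    then have "card P \<le> 1" using card_mono[of "{U}" P] by simp
    then show False using card_P k2 by simp
  qed
  then obtain W where W: "W \<in> P" "W \<noteq> U" by auto
  then have "W \<subseteq> V - U" using P_disjoint[OF W(1) U] Union_P by auto
  then have "U \<subset> V" using P_nonempty[OF W(1)] U Union_P by auto
  then show ?thesis using finite_V n_eq_card by (simp add: psubset_card_mono)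
qed

lemma card_P_member_pos: "U \<in> P \<Longrightarrow> 0 < card U"
proof -
  assume U: "U \<in> P"
  then have "finite U" using Union_P finite_V by (meson Union_upper finite_subset)
  then show ?thesis using P_nonempty[OF U] by (simp add: card_gt_0_iff)
qed

lemma card_district_of_bounds: "1 \<le> card (district_of x)" "card (district_of x) < n"
  using card_P_member_pos card_P_member_less_n district_of by (auto simp: Suc_le_eq)

lemma district_of_arc:
  obtains a l where "district_of x = vtx ` {a..<a + int l}" "card (district_of x) = l"
    "a \<le> x" "x < a + int l"
proof -
  obtain a l where al: "0 \<le> l" "l \<le> int n" "district_of x = vtx ` {a..<a + l}"
    using consecutive_on_imp_vtx_arc[OF P_consecutive[OF district_of[THEN conjunct1]]] .
  then have card: "card (district_of x) = nat l" using card_vtx_image by simp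
  have "vtx x \<in> vtx ` {a..<a + l}" using al(3) district_of[of x] by simp
  then obtain y where y: "a \<le> y" "y < a + l" "vtx x = vtx y" by auto
  define a' where "a' = x - (y - a)"
  have "a' mod int n = (y - (y - a)) mod int n"
    unfolding a'_def using y(3) by (intro mod_diff_cong) (simp_all add: vtx_eq_iff)
  then have "vtx ` {a'..<a' + l} = vtx ` {a..<a + l}" by (intro vtx_image_shift) simp
  then show ?thesis using that[of a' "nat l"] al(1,3) card y unfolding a'_def by simp
qed

definition is_start :: "int \<Rightarrow> bool" where
  "is_start x \<longleftrightarrow> vtx (x - 1) \<notin> district_of x"

lemma is_start_arc:
  assumes start: "is_start x" and l: "card (district_of x) = l"
  shows "district_of x = vtx ` {x..<x + int l}"
proof -
  obtain a where a: "district_of x = vtx ` {a..<a + int l}" "a \<le> x" "x < a + int l"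
    using district_of_arc[of x] l by metis
  have "x = a"
  proof (rule ccontr)
    assume "x \<noteq> a"
    then have "vtx (x - 1) \<in> district_of x" using a by auto
    then show False using start unfolding is_start_def by simp
  qed
  then show ?thesis using a(1) by simp
qed

lemma is_start_next: "is_start x \<Longrightarrow> is_start (x + int (card (district_of x)))"
proof -
  assume start: "is_start x"
  define l where "l = card (district_of x)"
  have U: "district_of x = vtx ` {x..<x + int l}" using is_start_arc[OF start] l_def by simp
  have l: "1 \<le> l" "l < n" using card_district_of_bounds l_def by simp_all
  have "vtx (x + int l) \<notin> district_of x"
  proof
    assume "vtx (x + int l) \<in> district_of x"
    then obtain y where "x \<le> y" "y < x + int l" "vtx (x + int l) = vtx y" using U by auto
    then show False using vtx_eq_in_window[of "x + int l" y x] l by auto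
  qed
  then have "district_of (x + int l) \<noteq> district_of x" using district_of[of "x + int l"] by auto
  moreover have "vtx (x + int l - 1) \<in> district_of x" using U l by auto
  ultimately show ?thesis unfolding is_start_def l_def[symmetric]
    using P_same[OF district_of[THEN conjunct1] district_of[THEN conjunct1]] by blast
qed

lemma is_start_exists: "\<exists>x. is_start x"
proof -
  obtain a l where a: "district_of 0 = vtx ` {a..<a + int l}" "card (district_of 0) = l"
    using district_of_arc[of 0] by metis
  have l: "1 \<le> l" "l < n" using card_district_of_bounds a(2) by auto
  have "vtx a \<in> district_of 0" using a(1) l by auto
  then have da: "district_of a = district_of 0"
    by (rule district_of_unique[OF district_of[THEN conjunct1]])
  have "vtx (a - 1) \<notin> district_of 0"
  proof
    assume "vtx (a - 1) \<in> district_of 0"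
    then have "vtx (a - 1 + int n) \<in> vtx ` {a..<a + int l}" using a(1) vtx_add_n by simp
    then obtain y where "a \<le> y" "y < a + int l" "vtx (a - 1 + int n) = vtx y" by auto
    then show False using vtx_eq_in_window[of "a - 1 + int n" y a] l by auto
  qed
  then show ?thesis unfolding is_start_def using da by auto
qed

definition start :: "nat \<Rightarrow> int" where
  "start j = ((\<lambda>x. x + int (card (district_of x))) ^^ j) (SOME x. is_start x)"

lemma start_Suc: "start (Suc j) = start j + int (card (district_of (start j)))"
  unfolding start_def by simp

lemma is_start_start: "is_start (start j)"
proof (induction j)
  case 0 then show ?case unfolding start_def using is_start_exists by (simp add: someI_ex)
next
  case (Suc j) then show ?case unfolding start_Suc by (rule is_start_next)
qed

lemma start_step: "start j < start (Suc j)"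
  unfolding start_Suc using card_district_of_bounds(1)[of "start j"] by (simp add: Suc_le_eq)

lemma start_less: "i < j \<Longrightarrow> start i < start j"
  using lift_Suc_mono_less[of start] start_step by blast

lemma start_le: "i \<le> j \<Longrightarrow> start i \<le> start j"
  using start_less[of i j] by (cases "i = j") auto

lemma district_of_start: "district_of (start j) = vtx ` {start j..<start (Suc j)}"
  unfolding start_Suc by (rule is_start_arc[OF is_start_start refl])

definition nstarts :: nat where
  "nstarts = (LEAST m. start 0 + int n \<le> start m)"

lemma nstarts:
  "start 0 + int n \<le> start nstarts" "m < nstarts \<Longrightarrow> start m < start 0 + int n"
proof -
  have "start 0 + int j \<le> start j" for j
  proof (induction j)
    case (Suc j) then show ?case using start_step[of j] by simp
  qed simp
  then have ex: "\<exists>m. start 0 + int n \<le> start m" by blast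
  show "start 0 + int n \<le> start nstarts" unfolding nstarts_def using LeastI_ex[OF ex] .
  show "m < nstarts \<Longrightarrow> start m < start 0 + int n"
    unfolding nstarts_def using not_less_Least by fastforce
qed

lemma nstarts_pos: "0 < nstarts"
  using nstarts(1) n_ge_3 by (cases nstarts) auto

lemma start_nstarts: "start nstarts = start 0 + int n"
proof (rule ccontr)
  assume "start nstarts \<noteq> start 0 + int n"
  then have gt: "start 0 + int n < start nstarts" using nstarts(1) by simp
  let ?y = "start (nstarts - 1)"
  have y: "start 0 \<le> ?y" "?y < start 0 + int n" using start_le nstarts(2) nstarts_pos by auto
  have "vtx (start 0 + int n) \<in> district_of ?y"
    using district_of_start[of "nstarts - 1"] nstarts_pos gt y by auto
  then have "district_of (start 0) = district_of ?y"
    using district_of_unique[OF district_of[THEN conjunct1]] vtx_add_n by simp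
  then have "vtx ?y \<in> vtx ` {start 0..<start 1}"
    using district_of[of ?y] district_of_start[of 0] by simp
  then obtain z where z: "start 0 \<le> z" "z < start 1" "vtx ?y = vtx z" by auto
  have start_1: "start 1 < start 0 + int n"
    using start_Suc[of 0] card_district_of_bounds(2) by simp
  then have "?y < start 1" using vtx_eq_in_window[of ?y z "start 0"] z y by auto
  then have "nstarts = 1" using start_le[of 1 "nstarts - 1"] nstarts_pos by linarith
  then show False using gt start_1 by simp
qed

lemma P_eq_starts: "P = (\<lambda>j. district_of (start j)) ` {0..<nstarts}"
proof
  show "(\<lambda>j. district_of (start j)) ` {0..<nstarts} \<subseteq> P" using district_of by auto
  show "P \<subseteq> (\<lambda>j. district_of (start j)) ` {0..<nstarts}"
  proof
    fix U assume U: "U \<in> P"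
    then obtain u where u: "u \<in> U" using P_nonempty by blast
    then have "u \<in> vtx ` {start 0..<start nstarts}"
      using U Union_P vtx_image_window[of "start 0"] start_nstarts by auto
    then obtain x where x: "start 0 \<le> x" "x < start nstarts" "u = vtx x" by auto
    then obtain j where j: "j < nstarts" "start j \<le> x" "x < start (Suc j)"
      using mono_seq_locate[of start x nstarts] start_step by (auto simp: less_imp_le)
    then have "u \<in> district_of (start j)" using district_of_start[of j] x by auto
    then have "U = district_of (start j)" using P_same[OF U district_of[THEN conjunct1] u] by simp
    then show "U \<in> (\<lambda>j. district_of (start j)) ` {0..<nstarts}" using j by auto
  qed
qed

lemma inj_on_district_of_start: "inj_on (\<lambda>j. district_of (start j)) {0..<nstarts}"
proof -
  have distinct: "district_of (start i) \<noteq> district_of (start j)" if ij: "i < j" "j < nstarts" for i j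
  proof
    assume "district_of (start i) = district_of (start j)"
    then have "vtx (start j) \<in> vtx ` {start i..<start (Suc i)}"
      using district_of[of "start j"] district_of_start[of i] by simp
    then obtain z where z: "start i \<le> z" "z < start (Suc i)" "vtx (start j) = vtx z" by auto
    have "start j < start 0 + int n" "z < start 0 + int n"
      using start_less[OF ij(2)] start_le[of "Suc i" nstarts] ij z start_nstarts by auto
    moreover have "start 0 \<le> start j" "start 0 \<le> z" using start_le[of 0 j] start_le[of 0 i] z
      by auto
    ultimately have "start j = z" using vtx_eq_in_window[OF z(3)] by simp
    moreover have "start (Suc i) \<le> start j" using start_le ij by simp
    ultimately show False using z by simp
  qed
  then show ?thesis
  proof (intro inj_onI)
    fix i j assume "i \<in> {0..<nstarts}" "j \<in> {0..<nstarts}"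
      "district_of (start i) = district_of (start j)"
    then show "i = j" using distinct[of i j] distinct[of j i]
      by (cases i j rule: linorder_cases) auto
  qed
qed

lemma nstarts_eq_k: "nstarts = k"
  using card_image[OF inj_on_district_of_start] P_eq_starts card_P by simp

lemma start_period: "start (j + k) = start j + int n"
proof (induction j)
  case 0 then show ?case using start_nstarts nstarts_eq_k by simp
next
  case (Suc j)
  have "district_of (start j + int n) = district_of (start j)"
    using district_of_unique[OF district_of[THEN conjunct1], of "start j + int n" "start j"]
      district_of[of "start j"] vtx_add_n by simp
  then show ?case using Suc start_Suc[of "j + k"] start_Suc[of j] by simp
qed

lemma cuts_start: "cuts start"
proof -
  have "real_of_int (start (Suc j) - start j) \<le> real d + s" for j
    using P_balanced[OF district_of[THEN conjunct1], of "start j"] start_Suc[of j] card_div_k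
    by (simp add: abs_le_iff)
  then show ?thesis unfolding cuts_def using start_period start_step by blast
qed

lemma cut_partition_start: "cut_partition start = P"
proof -
  have "district start j = district_of (start j)" for j
    unfolding district_def using district_of_start by simp
  then show ?thesis unfolding cut_partition_def using P_eq_starts nstarts_eq_k by simp
qed

end

section \<open>The diameter bound\<close>

lemma Canon_cut_representative:
  assumes "P \<in> Canon V E C s k" "k \<ge> 2"
  obtains f where "cuts f" "cut_partition f = P" "\<forall>j. 0 \<le> defect f j"
proof -
  obtain f where "cuts f" "cut_partition f = cut_partition (start P)" "\<forall>j. 0 \<le> defect f j"
    by (rule nonneg_defect_representative[OF cuts_start[OF assms]])
  then show ?thesis using that cut_partition_start[OF assms] by simp
qed

lemma Canon_reach_k_ge_2:
  assumes k2: "k \<ge> 2" and P: "P \<in> Canon V E C s k" and Q: "Q \<in> Canon V E C s k"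
  shows "reach (k^2) P Q"
proof -
  obtain f where f: "cuts f" "cut_partition f = P" "\<forall>j. 0 \<le> defect f j"
    using Canon_cut_representative[OF P k2] .
  obtain g where g: "cuts g" "cut_partition g = Q" "\<forall>j. 0 \<le> defect g j"
    using Canon_cut_representative[OF Q k2] .
  define \<delta> where "\<delta> = (g 0 - f 0) mod int d"
  have \<delta>: "0 \<le> \<delta>" "\<delta> < int d" unfolding \<delta>_def using d_pos by simp_all
  let ?m = "\<Sum>{0..k - 1}"
  have descend_P: "reach ?m P (cut_partition (equal_cuts (f 0)))"
    using reach_equal_cuts[OF f(1) k2 f(3)] f(2) by simp
  have rotate: "reach k (cut_partition (equal_cuts (f 0))) (cut_partition (equal_cuts (g 0)))"
    using equal_cuts_rotate[OF k2 \<delta>] cut_partition_equal_cuts_mod_d[of "g 0" "f 0"]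
    unfolding \<delta>_def by simp
  have ascend_Q: "reach ?m (cut_partition (equal_cuts (g 0))) Q"
    using reachable_within_sym[OF symp_canon_move reach_equal_cuts[OF g(1) k2 g(3)]] g(2) by simp
  have "reach (?m + k + ?m) P Q"
    using reachable_within_trans[OF reachable_within_trans[OF descend_P rotate] ascend_Q] .
  moreover have "2 * ?m = (k - 1) * k" using double_gauss_sum[where 'a=nat, of "k - 1"] k2 by simp
  then have "?m + k + ?m = k^2" using k2 by (cases k) (simp_all add: power2_eq_square)
  ultimately show ?thesis by simp
qed

lemma Canon_k_eq_1:
  assumes "k = 1" "P \<in> Canon V E C s k"
  shows "P = {V}"
proof -
  have "card P = 1" "\<Union>P = V"
    using assms unfolding Canon_def Bal_def connected_partition_def by auto
  then show ?thesis by (metis card_1_singletonE cSup_singleton)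
qed

lemma Canon_reach:
  assumes P: "P \<in> Canon V E C s k" and Q: "Q \<in> Canon V E C s k"
  shows "reach (k^2 + 1) P Q"
proof (cases "k = 1")
  case True
  then have "P = Q" using Canon_k_eq_1[OF True P] Canon_k_eq_1[OF True Q] by simp
  then show ?thesis using reachable_within_refl by simp
next
  case False
  then have "reach (k^2) P Q" using Canon_reach_k_ge_2 P Q k_pos by simp
  then show ?thesis by (rule reachable_within_mono) simp
qed

end

theorem mainTheorem4:
  fixes V :: "'a set" and E :: "'a \<Rightarrow> 'a \<Rightarrow> bool" and C :: "'a list"
    and k :: nat and s :: real
  assumes "simple_graph V E"
    and "hamilton_cycle V E C"
    and "k \<ge> 1" and "k dvd card V"
    and "s \<ge> real (card V) / real k"
  shows "\<forall>P \<in> Canon V E C s k. \<forall>Q \<in> Canon V E C s k.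
           \<exists>m \<le> k^2 + 1.
             ((\<lambda>X Y. X \<in> Canon V E C s k \<and> Y \<in> Canon V E C s k \<and> R_edge V E s k X Y) ^^ m) P Q"
proof -
  interpret cycle_districting V E C k s using assms by unfold_locales
  have "canon_move = (\<lambda>X Y. X \<in> Canon V E C s k \<and> Y \<in> Canon V E C s k \<and> R_edge V E s k X Y)"
    unfolding canon_move_def by (intro ext) simp
  then show ?thesis using Canon_reach unfolding reachable_within_def by simp
qed

end
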